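(* Let $G=K_{r_1,\dots,r_k}$ with partition sets $X_1,\dots,X_k$, $|X_i|=r_i$. Suppose $H$ is a good bisection of $G$ with partition sets $V_1,V_2$. Then for each $i\in[k]$: (i) if $X_i$ crosses $H$ and $|\overline{X_i}|$ is even, then $|\overline{X_i}\cap V_1|=|\overline{X_i}\cap V_2|$ and $\big||X_i\cap V_1|-|X_i\cap V_2|\big|\le 1$; (ii) if $X_i$ crosses $H$ and $|\overline{X_i}|$ is odd, then $\big||\overline{X_i}\cap V_1|-|\overline{X_i}\cap V_2|\big|=1$ and $\big||X_i\cap V_1|-|X_i\cap V_2|\big|\le 2$.
   Context: A bisection of a graph $G$ is a bipartite spanning subgraph $H$ of $G$ with partition sets $V_1,V_2$ (every edge of $H$ joins $V_1$ and $V_2$) with $||V_1|-|V_2||\le 1$. It is good if $2d_H(v)\ge d_G(v)-1$ for every $v\in V(G)$. For $W\subseteq V(G)$, $\overline{W}=V(G)\setminus W$. A partition set $X_i$ crosses $H$ if $X_i\cap V_1\neq\emptyset$ and $X_i\cap V_2\ne\emptyset$. *)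

theory Defs
  imports Main
begin

definition deg :: "'a set \<Rightarrow> ('a \<Rightarrow> 'a \<Rightarrow> bool) \<Rightarrow> 'a \<Rightarrow> nat" where
  "deg V E v = card {u \<in> V. E v u}"

text \<open>G = K_{r_1,...,r_k} on vertex set V with partition sets X 0, ..., X (k-1)
  (indices shifted to 0..k-1), |X i| = r_i \<ge> 1.\<close>
definition complete_multipartite ::
  "'a set \<Rightarrow> ('a \<Rightarrow> 'a \<Rightarrow> bool) \<Rightarrow> nat \<Rightarrow> (nat \<Rightarrow> 'a set) \<Rightarrow> bool" where
  "complete_multipartite V E k X \<longleftrightarrow>
     finite V \<and> (\<forall>i<k. X i \<noteq> {}) \<and>
     (\<forall>i<k. \<forall>j<k. i \<noteq> j \<longrightarrow> X i \<inter> X j = {}) \<and>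
     (\<Union>i<k. X i) = V \<and>
     (\<forall>u v. E u v \<longleftrightarrow> u \<in> V \<and> v \<in> V \<and> (\<exists>i<k. \<exists>j<k. i \<noteq> j \<and> u \<in> X i \<and> v \<in> X j))"

definition bisection ::
  "'a set \<Rightarrow> ('a \<Rightarrow> 'a \<Rightarrow> bool) \<Rightarrow> ('a \<Rightarrow> 'a \<Rightarrow> bool) \<Rightarrow> 'a set \<Rightarrow> 'a set \<Rightarrow> bool" where
  "bisection V E EH V1 V2 \<longleftrightarrow>
     (\<forall>u v. EH u v \<longrightarrow> E u v) \<and> (\<forall>u v. EH u v \<longleftrightarrow> EH v u) \<and>
     V1 \<union> V2 = V \<and> V1 \<inter> V2 = {} \<and>
     (\<forall>u v. EH u v \<longrightarrow> (u \<in> V1 \<and> v \<in> V2) \<or> (u \<in> V2 \<and> v \<in> V1)) \<and>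
     \<bar>int (card V1) - int (card V2)\<bar> \<le> 1"

definition good_bisection ::
  "'a set \<Rightarrow> ('a \<Rightarrow> 'a \<Rightarrow> bool) \<Rightarrow> ('a \<Rightarrow> 'a \<Rightarrow> bool) \<Rightarrow> 'a set \<Rightarrow> 'a set \<Rightarrow> bool" where
  "good_bisection V E EH V1 V2 \<longleftrightarrow>
     bisection V E EH V1 V2 \<and>
     (\<forall>v \<in> V. 2 * int (deg V EH v) \<ge> int (deg V E v) - 1)"

definition crosses :: "'a set \<Rightarrow> 'a set \<Rightarrow> 'a set \<Rightarrow> bool" where
  "crosses Xi V1 V2 \<longleftrightarrow> Xi \<inter> V1 \<noteq> {} \<and> Xi \<inter> V2 \<noteq> {}"

end

theory Submission
  imports Defs
begin

text \<open>A vertex of X i is adjacent in G to all of W = V - X i and to nothing else, so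
  deg G = |W|. In a bisection its H-neighbours lie on the opposite side, i.e. in W \<inter> V2 for a
  vertex in V1 and in W \<inter> V1 for a vertex in V2. Hence if X i crosses H, goodness at one vertex
  on each side gives |W| - 1 \<le> 2 |W \<inter> V2| and |W| - 1 \<le> 2 |W \<inter> V1|, which forces the two halves
  of W to differ by at most one, and by exactly the parity of |W|. The bound on X i follows
  because the halves of V differ by at most one.\<close>

lemma complete_multipartite_neighbours:
  assumes "complete_multipartite V E k X" and "i < k" and "v \<in> X i"
  shows "{u \<in> V. E v u} = V - X i"
proof -
  have disjoint: "\<And>j. j < k \<Longrightarrow> j \<noteq> i \<Longrightarrow> X i \<inter> X j = {}"
    and cover: "(\<Union>j<k. X j) = V"
    and edge: "\<And>u. E v u \<longleftrightarrow> v \<in> V \<and> u \<in> V \<and> (\<exists>a<k. \<exists>b<k. a \<noteq> b \<and> v \<in> X a \<and> u \<in> X b)"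
    using assms(1,2) unfolding complete_multipartite_def by blast+
  have "v \<in> V" using assms cover by blast
  show ?thesis
  proof (intro equalityI subsetI)
    fix u assume "u \<in> {u \<in> V. E v u}"
    then obtain a b where "a < k" "b < k" "a \<noteq> b" "v \<in> X a" "u \<in> X b" "u \<in> V"
      using edge by blast
    moreover have "a = i" using disjoint \<open>a < k\<close> \<open>v \<in> X a\<close> assms(3) by blast
    ultimately show "u \<in> V - X i" using disjoint by blast
  next
    fix u assume u: "u \<in> V - X i"
    then obtain j where "j < k" "u \<in> X j" using cover by blast
    then show "u \<in> {u \<in> V. E v u}" using edge u assms(2,3) \<open>v \<in> V\<close> by blast
  qed
qed

lemma deg_complete_multipartite:
  assumes "complete_multipartite V E k X" and "i < k" and "v \<in> X i"
  shows "deg V E v = card (V - X i)"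
  using complete_multipartite_neighbours[OF assms] by (simp add: deg_def)

lemma bisection_swap:
  "bisection V E EH V1 V2 \<Longrightarrow> bisection V E EH V2 V1"
  unfolding bisection_def by (auto simp: abs_minus_commute)

lemma good_bisection_swap:
  "good_bisection V E EH V1 V2 \<Longrightarrow> good_bisection V E EH V2 V1"
  unfolding good_bisection_def using bisection_swap by blast

lemma bisection_neighbours_opposite:
  assumes "bisection V E EH V1 V2" and "v \<in> V1"
  shows "{u \<in> V. EH v u} \<subseteq> {u \<in> V. E v u} \<inter> V2"
  using assms unfolding bisection_def by blast

lemma deg_bisection_le:
  assumes "bisection V E EH V1 V2" and "finite V" and "v \<in> V1"
  shows "deg V EH v \<le> card ({u \<in> V. E v u} \<inter> V2)"
  unfolding deg_def using bisection_neighbours_opposite[OF assms(1,3)] assms(2)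
  by (intro card_mono) auto

lemma good_bisection_multipartite_opposite_side:
  assumes "complete_multipartite V E k X" and "good_bisection V E EH V1 V2"
    and "i < k" and "v \<in> X i \<inter> V1"
  shows "card (V - X i) \<le> 2 * card ((V - X i) \<inter> V2) + 1"
proof -
  have "finite V" using assms(1) unfolding complete_multipartite_def by blast
  have "v \<in> V" using assms(2,4) unfolding good_bisection_def bisection_def by blast
  then have "int (deg V E v) - 1 \<le> 2 * int (deg V EH v)"
    using assms(2) unfolding good_bisection_def by blast
  moreover have "deg V EH v \<le> card ((V - X i) \<inter> V2)"
    using deg_bisection_le[of V E EH V1 V2 v] assms \<open>finite V\<close>
      complete_multipartite_neighbours[OF assms(1,3)]
    unfolding good_bisection_def by force
  ultimately show ?thesis
    using deg_complete_multipartite[OF assms(1,3)] assms(4) by auto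
qed

lemma nearly_balanced_split:
  fixes c d :: nat
  assumes "c + d \<le> 2 * c + 1" and "c + d \<le> 2 * d + 1"
  shows "even (c + d) \<Longrightarrow> c = d"
    and "odd (c + d) \<Longrightarrow> \<bar>int c - int d\<bar> = 1"
  using assms by presburger+

lemma card_bisection_split:
  assumes "bisection V E EH V1 V2" and "finite V"
  shows "card V1 = card (W \<inter> V1) + card ((V - W) \<inter> V1)"
    and "card (V - W) = card ((V - W) \<inter> V1) + card ((V - W) \<inter> V2)"
proof -
  have V12: "V1 \<union> V2 = V" "V1 \<inter> V2 = {}"
    using assms(1) unfolding bisection_def by blast+
  have "(V - W) \<inter> V1 = V1 - W" "(V - W) \<inter> V2 = (V - W) - V1" using V12 by blast+
  then show "card V1 = card (W \<inter> V1) + card ((V - W) \<inter> V1)"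
    "card (V - W) = card ((V - W) \<inter> V1) + card ((V - W) \<inter> V2)"
    using card_Int_Diff[of V1 W] card_Int_Diff[of "V - W" V1] V12 assms(2)
    by (auto simp: Int_commute)
qed

theorem lemma3p1:
  fixes V :: "'a set" and E EH :: "'a \<Rightarrow> 'a \<Rightarrow> bool" and k :: nat
    and X :: "nat \<Rightarrow> 'a set" and V1 V2 :: "'a set"
  assumes "complete_multipartite V E k X"
    and "good_bisection V E EH V1 V2"
    and "i < k"
  shows "(crosses (X i) V1 V2 \<and> even (card (V - X i)) \<longrightarrow>
            card ((V - X i) \<inter> V1) = card ((V - X i) \<inter> V2) \<and>
            \<bar>int (card (X i \<inter> V1)) - int (card (X i \<inter> V2))\<bar> \<le> 1)
       \<and> (crosses (X i) V1 V2 \<and> odd (card (V - X i)) \<longrightarrow>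
            \<bar>int (card ((V - X i) \<inter> V1)) - int (card ((V - X i) \<inter> V2))\<bar> = 1 \<and>
            \<bar>int (card (X i \<inter> V1)) - int (card (X i \<inter> V2))\<bar> \<le> 2)"
proof (intro conjI impI; elim conjE)
  have bis: "bisection V E EH V1 V2" and "finite V"
    using assms(1,2) unfolding good_bisection_def complete_multipartite_def by blast+
  have balanced: "\<bar>int (card V1) - int (card V2)\<bar> \<le> 1"
    using bis unfolding bisection_def by blast
  note split = card_bisection_split[OF bis \<open>finite V\<close>, of "X i"]
    card_bisection_split(1)[OF bisection_swap[OF bis] \<open>finite V\<close>, of "X i"]
  assume "crosses (X i) V1 V2"
  then obtain a b where "a \<in> X i \<inter> V1" "b \<in> X i \<inter> V2" unfolding crosses_def by blast
  then have halves: "card (V - X i) \<le> 2 * card ((V - X i) \<inter> V2) + 1"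
      "card (V - X i) \<le> 2 * card ((V - X i) \<inter> V1) + 1"
    using good_bisection_multipartite_opposite_side[OF assms(1,2,3)]
      good_bisection_multipartite_opposite_side[OF assms(1) good_bisection_swap[OF assms(2)] assms(3)]
    by blast+
  note nearly_balanced = nearly_balanced_split[of "card ((V - X i) \<inter> V1)" "card ((V - X i) \<inter> V2)"]
  {
    assume "even (card (V - X i))"
    then show eq: "card ((V - X i) \<inter> V1) = card ((V - X i) \<inter> V2)"
      using nearly_balanced halves split by simp
    show "\<bar>int (card (X i \<inter> V1)) - int (card (X i \<inter> V2))\<bar> \<le> 1"
      using eq split balanced by linarith
  }
  {
    assume "odd (card (V - X i))"
    then show diff: "\<bar>int (card ((V - X i) \<inter> V1)) - int (card ((V - X i) \<inter> V2))\<bar> = 1"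
      using nearly_balanced halves split by simp
    show "\<bar>int (card (X i \<inter> V1)) - int (card (X i \<inter> V2))\<bar> \<le> 2"
      using diff split balanced by linarith
  }
qed

end
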